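(* Let $\mathcal G$ be a region (nonempty open connected subset) of $\mathbb C$ and let $S:\mathcal G\to\mathbb C^{p\times q}$ be holomorphic with $\|S(z)\|\le1$ (operator norm) for all $z\in\mathcal G$. (a) If $U\in\mathbb C^{p\times q}$ satisfies $U^*U=I_q$, then $\mathcal N(U+S(w))=\mathcal N(U+S(z))$ for all $w,z\in\mathcal G$. (b) If $V\in\mathbb C^{p\times q}$ satisfies $VV^*=I_p$, then $\mathcal R(V+S(w))=\mathcal R(V+S(z))$ for all $w,z\in\mathcal G$.
   Context: $\mathcal N(A)$ and $\mathcal R(A)$ denote the null space and the column space of a matrix $A$. *)

theory Defs
  imports "HOL-Analysis.Analysis"
begin

definition adjoint_mat :: "complex ^ 'n ^ 'm \<Rightarrow> complex ^ 'm ^ 'n" where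
  "adjoint_mat A = (\<chi> i j. cnj (A $ j $ i))"

definition null_space_mat :: "complex ^ 'n ^ 'm \<Rightarrow> (complex ^ 'n) set" where
  "null_space_mat A = {x. A *v x = 0}"

definition col_space_mat :: "complex ^ 'n ^ 'm \<Rightarrow> (complex ^ 'm) set" where
  "col_space_mat A = range (\<lambda>x. A *v x)"

end

theory Submission
  imports Defs "HOL-Complex_Analysis.Conformal_Mappings"
begin

text \<open>
  Both parts rest on one rigidity phenomenon. If a contractive holomorphic family \<open>S\<close> maps a
  vector \<open>a\<close> at one point \<open>w\<close> onto a vector \<open>c\<close> of the same length, then the scalar function
  \<open>z \<mapsto> \<langle>S(z) a, c\<rangle>\<close> attains its maximal possible modulus \<open>|a| |c|\<close> at \<open>w\<close>, hence is constant by
  the maximum modulus principle, and equality in Cauchy-Schwarz forces \<open>S(z) a = c\<close> everywhere.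
  For (a), \<open>x \<in> \<N>(U + S(w))\<close> means \<open>S(w) x = -U x\<close> with \<open>|U x| = |x|\<close>. For (b), the range of a
  matrix is the orthogonal complement of the kernel of its adjoint, and \<open>y \<in> \<N>((V + S(w))\<^sup>*)\<close>
  is handled through the pairing \<open>\<langle>S(z) (-V\<^sup>* y), y\<rangle> = \<langle>-V\<^sup>* y, S(z)\<^sup>* y\<rangle>\<close>.
\<close>

definition cinner :: "complex ^ 'n \<Rightarrow> complex ^ 'n \<Rightarrow> complex" where
  "cinner x y = (\<Sum>i\<in>UNIV. x $ i * cnj (y $ i))"

lemma Re_cinner: "Re (cinner x y) = x \<bullet> y"
  by (simp add: cinner_def inner_vec_def inner_complex_def)

lemma cinner_self: "cinner x x = of_real (norm x ^ 2)"
proof (rule complex_eqI)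
  show "Re (cinner x x) = Re (of_real (norm x ^ 2))"
    by (simp add: Re_cinner power2_norm_eq_inner)
  show "Im (cinner x x) = Im (of_real (norm x ^ 2))"
    by (simp add: cinner_def Im_sum)
qed

lemma cinner_matrix_vector_mult: "cinner (A *v x) y = cinner x (adjoint_mat A *v y)"
proof -
  have "cinner (A *v x) y = (\<Sum>i\<in>UNIV. \<Sum>j\<in>UNIV. A$i$j * x$j * cnj (y$i))"
    unfolding cinner_def matrix_vector_mult_def by (simp add: sum_distrib_right)
  also have "\<dots> = (\<Sum>j\<in>UNIV. \<Sum>i\<in>UNIV. A$i$j * x$j * cnj (y$i))"
    by (rule sum.swap)
  also have "\<dots> = cinner x (adjoint_mat A *v y)"
    unfolding cinner_def matrix_vector_mult_def adjoint_mat_def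
    by (simp add: sum_distrib_left mult_ac)
  finally show ?thesis .
qed

lemma norm_cinner_le: "cmod (cinner x y) \<le> norm x * norm y"
proof (cases "cinner x y = 0")
  case False
  define u where "u = cinner x y / of_real (cmod (cinner x y))"
  define y' where "y' = (\<chi> i. u * y $ i)"
  have "cinner x y' = cnj u * cinner x y"
    by (simp add: cinner_def y'_def sum_distrib_left mult_ac)
  also have "\<dots> = of_real (cmod (cinner x y))"
    using False unfolding u_def
    by (simp add: complex_norm_square[symmetric] power2_eq_square field_simps)
  finally have "cmod (cinner x y) = x \<bullet> y'"
    by (metis Re_complex_of_real Re_cinner)
  also have "\<dots> \<le> norm x * norm y'"
    by (rule norm_cauchy_schwarz)
  also have "norm y' = norm y"
    using False by (simp add: norm_vec_def y'_def norm_mult u_def norm_divide)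
  finally show ?thesis .
qed simp

lemma adjoint_mat_adjoint_mat [simp]: "adjoint_mat (adjoint_mat A) = A"
  by (simp add: adjoint_mat_def vec_eq_iff)

lemma adjoint_mat_add: "adjoint_mat (A + B) = adjoint_mat A + adjoint_mat B"
  by (simp add: adjoint_mat_def vec_eq_iff)

lemma norm_isometry_mat_mult:
  assumes "adjoint_mat U ** U = mat 1"
  shows "norm (U *v x) = norm x"
proof -
  have "cinner (U *v x) (U *v x) = cinner x x"
    by (simp add: cinner_matrix_vector_mult matrix_vector_mul_assoc assms)
  then have "norm (U *v x) ^ 2 = norm x ^ 2"
    unfolding cinner_self of_real_eq_iff .
  then show ?thesis
    by (simp add: power2_eq_iff_nonneg)
qed

lemma norm_adjoint_mat_mult_le:
  assumes "\<And>v. norm (A *v v) \<le> norm v"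
  shows "norm (adjoint_mat A *v y) \<le> norm y"
proof -
  define b where "b = adjoint_mat A *v y"
  have "cinner y (A *v b) = cinner b b"
    by (simp add: b_def cinner_matrix_vector_mult)
  then have "norm b ^ 2 = cmod (cinner y (A *v b))"
    by (simp add: cinner_self norm_power)
  also have "\<dots> \<le> norm y * norm (A *v b)"
    by (rule norm_cinner_le)
  also have "\<dots> \<le> norm y * norm b"
    by (simp add: assms mult_left_mono)
  finally have "norm b * norm b \<le> norm y * norm b"
    by (simp add: power2_eq_square)
  then show ?thesis
    unfolding b_def by (cases "norm b = 0") (auto simp: mult_le_cancel_right)
qed

lemma eq_of_inner_eq_norm_square:
  fixes u v :: "'a :: real_inner"
  assumes "norm u \<le> norm v" and "u \<bullet> v = norm v ^ 2"
  shows "u = v"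
proof -
  have "norm (u - v) ^ 2 = norm u ^ 2 - 2 * (u \<bullet> v) + norm v ^ 2"
    by (simp add: power2_norm_eq_inner inner_diff inner_commute)
  also have "\<dots> \<le> 0"
    using assms power_mono[OF assms(1) norm_ge_zero, of 2] by simp
  finally show ?thesis
    by simp
qed

text \<open>Orthogonality here is with respect to the real inner product \<open>Re \<langle>x, y\<rangle>\<close> on \<open>\<complex>\<^sup>n\<close>.\<close>

lemma orthogonal_comp_col_space_mat:
  "(col_space_mat A)\<^sup>\<bottom> = null_space_mat (adjoint_mat A)"
proof -
  have "(\<forall>x. (A *v x) \<bullet> y = 0) \<longleftrightarrow> adjoint_mat A *v y = 0" for y
  proof
    assume "\<forall>x. (A *v x) \<bullet> y = 0"
    then have "(A *v (adjoint_mat A *v y)) \<bullet> y = 0" ..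
    then have "norm (adjoint_mat A *v y) ^ 2 = 0"
      using Re_cinner[of "A *v (adjoint_mat A *v y)" y]
      by (simp add: cinner_matrix_vector_mult cinner_self)
    then show "adjoint_mat A *v y = 0"
      by simp
  next
    assume y: "adjoint_mat A *v y = 0"
    show "\<forall>x. (A *v x) \<bullet> y = 0"
    proof
      fix x
      have "(A *v x) \<bullet> y = Re (cinner x (adjoint_mat A *v y))"
        by (simp only: Re_cinner[symmetric] cinner_matrix_vector_mult)
      then show "(A *v x) \<bullet> y = 0"
        by (simp add: y cinner_def)
    qed
  qed
  then show ?thesis
    by (auto simp: orthogonal_comp_def orthogonal_def col_space_mat_def null_space_mat_def)
qed

lemma col_space_mat_eq_orthogonal_comp:
  "col_space_mat A = (null_space_mat (adjoint_mat A))\<^sup>\<bottom>"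
proof -
  have "subspace (col_space_mat A)"
    unfolding col_space_mat_def
    by (intro linear_subspace_image subspace_UNIV matrix_vector_mul_linear)
  then show ?thesis
    by (simp add: orthogonal_comp_self flip: orthogonal_comp_col_space_mat)
qed

locale contractive_holomorphic_family =
  fixes G :: "complex set" and S :: "complex \<Rightarrow> complex ^ 'n ^ 'm"
  assumes open_G: "open G" and connected_G: "connected G"
    and holomorphic_entries: "\<And>i j. (\<lambda>z. S z $ i $ j) holomorphic_on G"
    and contractive: "\<And>z v. z \<in> G \<Longrightarrow> norm (S z *v v) \<le> norm v"
begin

lemma cinner_peak_const:
  assumes "w \<in> G" and "z \<in> G"
    and peak: "cinner (S w *v a) c = of_real (norm a * norm c)"
  shows "cinner (S z *v a) c = of_real (norm a * norm c)"
proof -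
  define f where "f z = cinner (S z *v a) c" for z
  have "f holomorphic_on G"
    unfolding f_def cinner_def matrix_vector_mult_def
    by (simp only: vec_lambda_beta) (intro holomorphic_intros holomorphic_entries)
  moreover have "norm (f t) \<le> norm (f w)" if "t \<in> G" for t
  proof -
    have "norm (f t) \<le> norm (S t *v a) * norm c"
      unfolding f_def by (rule norm_cinner_le)
    also have "\<dots> \<le> norm a * norm c"
      by (simp add: contractive that mult_right_mono)
    finally show ?thesis
      using peak by (simp add: f_def norm_mult)
  qed
  ultimately have "f constant_on G"
    using maximum_modulus_principle[of f G G w] open_G connected_G \<open>w \<in> G\<close> by auto
  then have "f z = f w"
    using assms by (auto simp: constant_on_def)
  then show ?thesis
    using peak by (simp add: f_def)
qed

lemma null_space_isometry_plus_subset: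
  assumes U: "adjoint_mat U ** U = mat 1" and "w \<in> G" and "z \<in> G"
  shows "null_space_mat (U + S w) \<subseteq> null_space_mat (U + S z)"
proof
  fix x assume "x \<in> null_space_mat (U + S w)"
  define c where "c = - (U *v x)"
  have Sw: "S w *v x = c"
    using \<open>x \<in> null_space_mat (U + S w)\<close>
    by (simp add: c_def null_space_mat_def matrix_vector_mult_add_rdistrib eq_neg_iff_add_eq_0
        add.commute)
  have norm_c: "norm c = norm x"
    by (simp add: c_def norm_isometry_mat_mult U)
  have "cinner (S w *v x) c = of_real (norm x * norm c)"
    by (simp add: Sw cinner_self norm_c power2_eq_square)
  then have "cinner (S z *v x) c = of_real (norm x * norm c)"
    by (rule cinner_peak_const[OF assms(2,3)])
  then have "(S z *v x) \<bullet> c = norm c ^ 2"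
    using Re_cinner[of "S z *v x" c] by (simp add: norm_c power2_eq_square)
  moreover have "norm (S z *v x) \<le> norm c"
    using contractive[OF \<open>z \<in> G\<close>, of x] norm_c by simp
  ultimately have "S z *v x = c"
    by (rule eq_of_inner_eq_norm_square[rotated])
  then show "x \<in> null_space_mat (U + S z)"
    by (simp add: c_def null_space_mat_def matrix_vector_mult_add_rdistrib)
qed

lemma null_space_adjoint_coisometry_plus_subset:
  assumes V: "V ** adjoint_mat V = mat 1" and "w \<in> G" and "z \<in> G"
  shows "null_space_mat (adjoint_mat (V + S w)) \<subseteq> null_space_mat (adjoint_mat (V + S z))"
proof
  fix y assume "y \<in> null_space_mat (adjoint_mat (V + S w))"
  define a where "a = - (adjoint_mat V *v y)"
  have Sw: "adjoint_mat (S w) *v y = a"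
    using \<open>y \<in> null_space_mat (adjoint_mat (V + S w))\<close>
    by (simp add: a_def null_space_mat_def adjoint_mat_add matrix_vector_mult_add_rdistrib
        eq_neg_iff_add_eq_0 add.commute)
  have norm_a: "norm a = norm y"
    using norm_isometry_mat_mult[of "adjoint_mat V" y] V by (simp add: a_def)
  have "cinner (S w *v a) y = of_real (norm a * norm y)"
    by (simp add: cinner_matrix_vector_mult Sw cinner_self norm_a power2_eq_square)
  then have "cinner (S z *v a) y = of_real (norm a * norm y)"
    by (rule cinner_peak_const[OF assms(2,3)])
  then have "cinner a (adjoint_mat (S z) *v y) = of_real (norm a * norm y)"
    by (simp only: cinner_matrix_vector_mult)
  then have "(adjoint_mat (S z) *v y) \<bullet> a = norm a ^ 2"
    using Re_cinner[of a "adjoint_mat (S z) *v y"]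
    by (simp add: inner_commute norm_a power2_eq_square)
  moreover have "norm (adjoint_mat (S z) *v y) \<le> norm a"
    using norm_adjoint_mat_mult_le[of "S z" y, OF contractive[OF \<open>z \<in> G\<close>]] norm_a
    by simp
  ultimately have "adjoint_mat (S z) *v y = a"
    by (rule eq_of_inner_eq_norm_square[rotated])
  then show "y \<in> null_space_mat (adjoint_mat (V + S z))"
    by (simp add: a_def null_space_mat_def adjoint_mat_add matrix_vector_mult_add_rdistrib)
qed

end

theorem lemma3p9:
  fixes G :: "complex set" and S :: "complex \<Rightarrow> complex ^ 'q ^ 'p"
  assumes "open G" and "connected G" and "G \<noteq> {}"
    and "\<And>i j. (\<lambda>z. S z $ i $ j) holomorphic_on G"
    and "\<And>z. z \<in> G \<Longrightarrow> onorm (\<lambda>x. S z *v x) \<le> 1"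
  shows "(\<forall>U :: complex ^ 'q ^ 'p. adjoint_mat U ** U = mat 1 \<longrightarrow>
            (\<forall>w\<in>G. \<forall>z\<in>G. null_space_mat (U + S w) = null_space_mat (U + S z)))
       \<and> (\<forall>V :: complex ^ 'q ^ 'p. V ** adjoint_mat V = mat 1 \<longrightarrow>
            (\<forall>w\<in>G. \<forall>z\<in>G. col_space_mat (V + S w) = col_space_mat (V + S z)))"
proof -
  have "norm (S z *v v) \<le> norm v" if "z \<in> G" for z v
    using onorm[OF matrix_vector_mul_bounded_linear, of "S z" v]
      mult_right_mono[OF assms(5)[OF that] norm_ge_zero, of v] by simp
  then interpret contractive_holomorphic_family G S
    using assms(1,2,4) by unfold_locales
  show ?thesis
  proof (intro conjI allI impI ballI)
    fix U :: "complex ^ 'q ^ 'p" and w z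
    assume "adjoint_mat U ** U = mat 1" and "w \<in> G" and "z \<in> G"
    then show "null_space_mat (U + S w) = null_space_mat (U + S z)"
      by (intro subset_antisym null_space_isometry_plus_subset)
  next
    fix V :: "complex ^ 'q ^ 'p" and w z
    assume "V ** adjoint_mat V = mat 1" and "w \<in> G" and "z \<in> G"
    then have "null_space_mat (adjoint_mat (V + S w)) = null_space_mat (adjoint_mat (V + S z))"
      by (intro subset_antisym null_space_adjoint_coisometry_plus_subset)
    then show "col_space_mat (V + S w) = col_space_mat (V + S z)"
      by (simp add: col_space_mat_eq_orthogonal_comp)
  qed
qed

end
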